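(* Let $W$ be a real symmetric $n\times n$ matrix with non-negative entries and zero diagonal, let $\lambda\ge 0$, and suppose $I+\lambda W = R^T R$ for some real matrix $R$ all of whose entries are non-negative. Then for every $z\in\mathbb{C}^n$ the function $x\mapsto D_{\lambda,W}(x;z)$ is convex on $\mathbb{C}^n$ (viewed as $\mathbb{R}^{2n}$).
   Context: For $x\in\mathbb{C}^n$, $|x|$ denotes the vector of magnitudes $(|x_1|,\dots,|x_n|)$ and $\|x\|_1=\sum_i |x_i|$. The penalty is $P_W(x)=\|x\|_1+\frac12\sum_{i,j} w_{i,j}|x_i x_j| = \|x\|_1+\frac12|x|^T W|x|$. For $\lambda\ge0$ and $z\in\mathbb{C}^n$, $D_{\lambda,W}(x;z)=\frac12\|z-x\|_2^2+\lambda P_W(x)$. *)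

theory Defs
  imports "HOL-Analysis.Analysis"
begin

definition cabsvec :: "complex ^ 'n \<Rightarrow> real ^ 'n" where
  "cabsvec x = (\<chi> i. cmod (x $ i))"

definition penalty :: "real ^ 'n ^ 'n \<Rightarrow> complex ^ 'n \<Rightarrow> real" where
  "penalty W x = (\<Sum>i\<in>UNIV. cmod (x $ i))
      + (1/2) * (\<Sum>i\<in>UNIV. \<Sum>j\<in>UNIV. (W $ i $ j) * cmod (x $ i * x $ j))"

definition Dfun :: "real \<Rightarrow> real ^ 'n ^ 'n \<Rightarrow> complex ^ 'n \<Rightarrow> complex ^ 'n \<Rightarrow> real" where
  "Dfun lam W z x = (1/2) * (norm (z - x))\<^sup>2 + lam * penalty W x"

end

theory Submission
  imports Defs
begin

text \<open>Expanding the square, D(x; z) is a constant, minus the real inner product z \<bullet> x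
  (= Re of the Hermitian product, hence real-linear in x), plus lam * |x|_1, plus half the
  quadratic form |x|^T (I + lam W) |x| = |R |x| |^2 = \<Sum>_k (\<Sum>_j R_kj |x_j|)^2.
  Since R \<ge> 0, each inner sum is a nonnegative combination of the convex functions |x_j|,
  hence convex and nonnegative, so its square is convex.\<close>

lemma convex_on_sum_fun:
  assumes "convex S" "finite A" "\<And>i. i \<in> A \<Longrightarrow> convex_on S (f i)"
  shows "convex_on S (\<lambda>x. \<Sum>i\<in>A. f i x)"
  using assms(2,3) by (induction A rule: finite_induct) (auto simp: convex_on_const assms(1))

lemma convex_on_mono_comp:
  fixes f :: "'a::real_vector \<Rightarrow> real"
  assumes f: "convex_on S f" and g: "convex_on T g" and mono: "mono_on T g"
    and T: "convex T" "f ` S \<subseteq> T"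
  shows "convex_on S (\<lambda>x. g (f x))"
proof (rule convex_onI)
  show "convex S" using f by (rule convex_on_imp_convex)
  fix t :: real and x y assume t: "0 < t" "t < 1" and xy: "x \<in> S" "y \<in> S"
  have mix_S: "(1 - t) *\<^sub>R x + t *\<^sub>R y \<in> S"
    using \<open>convex S\<close> t xy by (simp add: convex_alt)
  have mix_T: "(1 - t) * f x + t * f y \<in> T"
    using convexD_alt[OF T(1)] T(2) t xy by (simp add: image_subset_iff)
  have "g (f ((1 - t) *\<^sub>R x + t *\<^sub>R y)) \<le> g ((1 - t) * f x + t * f y)"
    using mono_onD[OF mono] mix_S mix_T T(2) convex_onD[OF f, of t x y] t xy by force
  also have "\<dots> \<le> (1 - t) * g (f x) + t * g (f y)"
    using convex_onD[OF g, of t "f x" "f y"] t xy T(2) by auto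
  finally show "g (f ((1 - t) *\<^sub>R x + t *\<^sub>R y)) \<le> (1 - t) * g (f x) + t * g (f y)" .
qed

lemma convex_on_power2_nonneg:
  fixes f :: "'a::real_vector \<Rightarrow> real"
  assumes "convex_on S f" "\<And>x. x \<in> S \<Longrightarrow> f x \<ge> 0"
  shows "convex_on S (\<lambda>x. (f x)\<^sup>2)"
proof (rule convex_on_mono_comp[OF assms(1)])
  show "convex_on {0..} (\<lambda>y::real. y\<^sup>2)"
    by (rule convex_on_subset[OF convex_power2]) auto
  show "mono_on {0..} (\<lambda>y::real. y\<^sup>2)"
    by (auto intro: mono_onI power_mono)
qed (use assms(2) in auto)

lemma convex_on_linear_comp:
  assumes g: "convex_on T g" and L: "linear L" and S: "convex S" "L ` S \<subseteq> T"
  shows "convex_on S (\<lambda>x. g (L x))"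
proof (rule convex_onI[OF _ S(1)])
  fix t :: real and x y assume "0 < t" "t < 1" "x \<in> S" "y \<in> S"
  then show "g (L ((1 - t) *\<^sub>R x + t *\<^sub>R y)) \<le> (1 - t) * g (L x) + t * g (L y)"
    using convex_onD[OF g, of t "L x" "L y"] S(2)
    by (auto simp: linear_add[OF L] linear_scale[OF L])
qed

lemma convex_on_linear:
  fixes f :: "'a::real_vector \<Rightarrow> real"
  assumes "linear f" "convex S"
  shows "convex_on S f"
  using convex_on_linear_comp[of UNIV "\<lambda>y. y", OF _ assms] by (simp add: convex_on_ident)

lemma convex_on_norm_component:
  assumes "convex S"
  shows "convex_on S (\<lambda>x::'a::real_normed_vector ^ 'n. norm (x $ j))"
  using convex_on_linear_comp[OF convex_on_dist[of UNIV 0]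
      bounded_linear.linear[OF bounded_linear_vec_nth] assms]
  by (simp add: dist_0_norm)

lemma norm_cabsvec [simp]: "norm (cabsvec x) = norm x"
  by (simp add: cabsvec_def norm_vec_def)

lemma sum_cmod_mult_eq_quadratic_form:
  "(\<Sum>i\<in>UNIV. \<Sum>j\<in>UNIV. W $ i $ j * cmod (x $ i * x $ j)) = cabsvec x \<bullet> (W *v cabsvec x)"
  by (simp add: inner_vec_def matrix_vector_mult_def cabsvec_def norm_mult sum_distrib_left mult_ac)

lemma inner_gram_matrix:
  fixes R :: "real ^ 'n ^ 'm"
  shows "a \<bullet> ((transpose R ** R) *v a) = (norm (R *v a))\<^sup>2"
  by (metis dot_lmul_matrix dot_square_norm inner_commute matrix_vector_mul_assoc transpose_matrix_vector)

lemma nonneg_matrix_cabsvec_component_nonneg: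
  fixes R :: "real ^ 'n ^ 'm"
  assumes "\<forall>i j. R $ i $ j \<ge> 0"
  shows "(R *v cabsvec x) $ k \<ge> 0"
  using assms by (simp add: matrix_vector_mult_def cabsvec_def sum_nonneg)

lemma convex_on_nonneg_matrix_cabsvec_component:
  fixes R :: "real ^ 'n ^ 'm"
  assumes "\<forall>i j. R $ i $ j \<ge> 0" "convex S"
  shows "convex_on S (\<lambda>x. (R *v cabsvec x) $ k)"
proof -
  have "convex_on S (\<lambda>x. \<Sum>j\<in>UNIV. R $ k $ j * cmod (x $ j))"
    using assms by (intro convex_on_sum_fun convex_on_cmul convex_on_norm_component) auto
  then show ?thesis
    by (simp add: matrix_vector_mult_def cabsvec_def)
qed

lemma convex_on_norm_nonneg_matrix_cabsvec_power2:
  fixes R :: "real ^ 'n ^ 'm"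
  assumes "\<forall>i j. R $ i $ j \<ge> 0" "convex S"
  shows "convex_on S (\<lambda>x. (norm (R *v cabsvec x))\<^sup>2)"
proof -
  have "convex_on S (\<lambda>x. \<Sum>k\<in>UNIV. ((R *v cabsvec x) $ k)\<^sup>2)"
    using assms nonneg_matrix_cabsvec_component_nonneg
    by (intro convex_on_sum_fun convex_on_power2_nonneg convex_on_nonneg_matrix_cabsvec_component) auto
  then show ?thesis
    unfolding power2_norm_eq_inner inner_vec_def by (simp add: power2_eq_square)
qed

lemma Dfun_eq_gram:
  fixes R :: "real ^ 'n ^ 'm"
  assumes "mat 1 + lam *\<^sub>R W = transpose R ** R"
  shows "Dfun lam W z x = (norm z)\<^sup>2 / 2 - z \<bullet> x + lam * (\<Sum>i\<in>UNIV. cmod (x $ i))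
           + (norm (R *v cabsvec x))\<^sup>2 / 2"
proof -
  let ?a = "cabsvec x"
  have "(norm (z - x))\<^sup>2 = (norm z)\<^sup>2 - 2 * (z \<bullet> x) + (norm x)\<^sup>2"
    by (simp add: power2_norm_eq_inner inner_diff_left inner_diff_right inner_commute)
  moreover have "(norm x)\<^sup>2 + lam * (?a \<bullet> (W *v ?a)) = (norm (R *v ?a))\<^sup>2"
  proof -
    have "(norm x)\<^sup>2 = ?a \<bullet> ?a"
      by (simp add: dot_square_norm)
    then show ?thesis
      by (simp flip: inner_gram_matrix assms
          add: matrix_vector_mult_add_rdistrib scaleR_matrix_vector_assoc[symmetric] inner_add_right)
  qed
  ultimately show ?thesis
    unfolding Dfun_def penalty_def sum_cmod_mult_eq_quadratic_form by (simp add: algebra_simps)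
qed

theorem mainTheorem2:
  fixes W :: "real ^ 'n ^ 'n" and R :: "real ^ 'n ^ 'm" and lam :: real
    and z :: "complex ^ 'n"
  assumes "transpose W = W"
    and "\<forall>i j. W $ i $ j \<ge> 0"
    and "\<forall>i. W $ i $ i = 0"
    and "lam \<ge> 0"
    and "mat 1 + lam *\<^sub>R W = transpose R ** R"
    and "\<forall>i j. R $ i $ j \<ge> 0"
  shows "convex_on UNIV (Dfun lam W z)"
proof -
  have Dfun_eq: "Dfun lam W z = (\<lambda>x. (norm z)\<^sup>2 / 2 + (- z) \<bullet> x
          + lam * (\<Sum>i\<in>UNIV. cmod (x $ i)) + (norm (R *v cabsvec x))\<^sup>2 / 2)"
    by (simp add: fun_eq_iff Dfun_eq_gram[OF assms(5)])
  have linear_part: "convex_on UNIV (\<lambda>x. (- z) \<bullet> x)"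
    by (intro convex_on_linear bounded_linear.linear bounded_linear_inner_right) simp
  have l1_part: "convex_on UNIV (\<lambda>x. lam * (\<Sum>i\<in>UNIV. cmod (x $ i)))"
    using \<open>lam \<ge> 0\<close> by (intro convex_on_cmul convex_on_sum_fun convex_on_norm_component) auto
  have quadratic_part: "convex_on UNIV (\<lambda>x. (norm (R *v cabsvec x))\<^sup>2 / 2)"
    using convex_on_norm_nonneg_matrix_cabsvec_power2[OF assms(6) convex_UNIV]
    by (rule convex_on_cdiv[rotated]) simp
  show ?thesis
    unfolding Dfun_eq
    by (intro convex_on_add linear_part l1_part quadratic_part) (simp add: convex_on_const)
qed

end
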